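(* Let $ABC$ be a triangle with incenter $I$, and let $H_A, H_B, H_C$ be the orthocenters of the triangles $BIC$, $CIA$, $AIB$ respectively. Let $O_A, O_B, O_C$ be the circumcenters of the triangles $AH_BH_C$, $BH_CH_A$, $CH_AH_B$ respectively. Then the reflections of the Euler line of triangle $O_AO_BO_C$ in its sidelines $O_BO_C$, $O_CO_A$, $O_AO_B$ are the lines $H_AI$, $H_BI$, $H_CI$ respectively.
   Context: The Euler line of a triangle is the line through its circumcenter, centroid and orthocenter. *)

theory Defs
  imports "HOL-Analysis.Analysis"
begin

definition incenter :: "complex \<Rightarrow> complex \<Rightarrow> complex \<Rightarrow> complex" where
  "incenter A B C =
     (let a = dist B C; b = dist C A; c = dist A B
      in (of_real a * A + of_real b * B + of_real c * C) / of_real (a + b + c))"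

definition orthocenter :: "complex \<Rightarrow> complex \<Rightarrow> complex \<Rightarrow> complex" where
  "orthocenter A B C =
     (THE H. inner (H - A) (B - C) = 0 \<and> inner (H - B) (C - A) = 0 \<and> inner (H - C) (A - B) = 0)"

definition circumcenter :: "complex \<Rightarrow> complex \<Rightarrow> complex \<Rightarrow> complex" where
  "circumcenter A B C = (THE X. dist X A = dist X B \<and> dist X B = dist X C)"

definition centroid :: "complex \<Rightarrow> complex \<Rightarrow> complex \<Rightarrow> complex" where
  "centroid A B C = (A + B + C) / 3"

definition line :: "complex \<Rightarrow> complex \<Rightarrow> complex set" where
  "line P Q = affine hull {P, Q}"

definition euler_line :: "complex \<Rightarrow> complex \<Rightarrow> complex \<Rightarrow> complex set" where
  "euler_line A B C = affine hull {circumcenter A B C, centroid A B C, orthocenter A B C}"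

definition reflect :: "complex \<Rightarrow> complex \<Rightarrow> complex \<Rightarrow> complex" where
  "reflect P Q z = P + ((Q - P) / cnj (Q - P)) * cnj (z - P)"

end

theory Submission
  imports Defs
begin

text \<open>
  Put the incenter at the origin and scale so that the incircle becomes the unit circle, touching
  BC, CA, AB at d, e, f. Then A = 2ef/(e+f), B = 2fd/(f+d), C = 2de/(d+e), and on the unit circle
  conjugation is z \<mapsto> 1/z, so every point of the configuration is a rational function of d, e, f
  whose defining properties reduce to polynomial identities:
  HA = 2d^2(e+f)/((d+e)(d+f)), OA = 2ef(ef-d^2)/P and the circumcenter of OA OB OC is
  -2(d+e+f)def/P, where P = (d+e)(e+f)(f+d). Reflecting this circumcenter and the centroid of
  OA OB OC in OB OC gives real multiples of HA, i.e. two distinct points of the line HA I,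
  so the reflected Euler line is HA I. The other two sides follow by cyclic symmetry.
\<close>

lemma inner_eq_iff_cnj:
  fixes x y :: complex
  shows "inner x y = r \<longleftrightarrow> x * cnj y + cnj x * y = of_real (2 * r)"
proof -
  have "x * cnj y + cnj x * y = of_real (2 * inner x y)"
    by (simp add: inner_complex_def complex_eq_iff algebra_simps)
  then show ?thesis
    by (metis mult_cancel_left of_real_eq_iff zero_neq_numeral)
qed

lemma inner_eq_0_iff_cnj:
  fixes x y :: complex
  shows "inner x y = 0 \<longleftrightarrow> x * cnj y + cnj x * y = 0"
  by (simp add: inner_eq_iff_cnj)

lemma dist_eq_iff_cnj:
  fixes X A B :: complex
  shows "dist X A = dist X B \<longleftrightarrow> (X - A) * cnj (X - A) = (X - B) * cnj (X - B)"
  unfolding dist_norm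
  by (metis complex_norm_square norm_ge_zero of_real_eq_iff power2_eq_iff_nonneg)

lemma collinear_iff_Im_cnj_mult:
  fixes A B C :: complex
  shows "collinear {A, B, C} \<longleftrightarrow> Im (cnj (B - A) * (C - A)) = 0"
proof -
  have "collinear {A, B, C} \<longleftrightarrow> collinear {0, B - A, C - A}"
    using collinear_3[of B A C] by (simp add: insert_commute)
  also have "\<dots> \<longleftrightarrow> (C - A) / (B - A) \<in> \<real>"
    by (rule collinear_iff_Reals)
  also have "\<dots> \<longleftrightarrow> Im (cnj (B - A) * (C - A)) = 0"
  proof (cases "B = A")
    case False
    then have "(C - A) / (B - A) = cnj (B - A) * (C - A) / of_real ((cmod (B - A))\<^sup>2)"
      unfolding complex_norm_square by (simp add: divide_simps)
    then show ?thesis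
      using False by (simp add: complex_is_Real_iff Im_divide_of_real)
  qed simp
  finally show ?thesis .
qed

lemma orthogonal_to_noncollinear_eq_0:
  fixes w u v :: complex
  assumes "\<not> collinear {0, u, v}" "inner w u = 0" "inner w v = 0"
  shows "w = 0"
proof -
  have "Re w * Re u + Im w * Im u = 0" "Re w * Re v + Im w * Im v = 0"
    using assms(2,3) by (simp_all add: inner_complex_def)
  then have "Re w * (Re u * Im v - Im u * Re v) = 0" "Im w * (Re u * Im v - Im u * Re v) = 0"
    by algebra+
  moreover have "Re u * Im v - Im u * Re v \<noteq> 0"
    using assms(1) by (simp add: collinear_iff_Im_cnj_mult)
  ultimately show ?thesis
    by (simp add: complex_eq_iff)
qed

lemma equidistant_diff_orthogonal:
  fixes X Y A B :: complex
  assumes "dist X A = dist X B" "dist Y A = dist Y B"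
  shows "inner (Y - X) (A - B) = 0"
  using assms unfolding dist_eq_iff_cnj inner_eq_0_iff_cnj complex_cnj_diff by algebra

lemma orthocenter_eqI:
  fixes A B C H :: complex
  assumes "\<not> collinear {A, B, C}"
    and H: "inner (H - A) (B - C) = 0" "inner (H - B) (C - A) = 0" "inner (H - C) (A - B) = 0"
  shows "orthocenter A B C = H"
  unfolding orthocenter_def
proof (rule the_equality)
  fix H'
  assume "inner (H' - A) (B - C) = 0 \<and> inner (H' - B) (C - A) = 0 \<and> inner (H' - C) (A - B) = 0"
  then have "inner (H' - H) (B - C) = 0" "inner (H' - H) (C - A) = 0"
    using H by (auto simp: inner_diff_left)
  moreover have "\<not> collinear {0, B - C, C - A}"
    using assms(1) by (simp add: collinear_iff_Im_cnj_mult algebra_simps)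
  ultimately show "H' = H"
    using orthogonal_to_noncollinear_eq_0 by force
qed (use H in blast)

lemma circumcenter_eqI:
  fixes A B C X :: complex
  assumes "\<not> collinear {A, B, C}" and X: "dist X A = dist X B" "dist X B = dist X C"
  shows "circumcenter A B C = X"
  unfolding circumcenter_def
proof (rule the_equality)
  fix Y assume "dist Y A = dist Y B \<and> dist Y B = dist Y C"
  then have "inner (Y - X) (A - B) = 0" "inner (Y - X) (B - C) = 0"
    using X equidistant_diff_orthogonal by blast+
  moreover have "\<not> collinear {0, A - B, B - C}"
    using assms(1) by (simp add: collinear_iff_Im_cnj_mult algebra_simps)
  ultimately show "Y = X"
    using orthogonal_to_noncollinear_eq_0 by force
qed (use X in blast)

lemma orthocenter_eq_vertex_sum:
  fixes A B C X :: complex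
  assumes "\<not> collinear {A, B, C}" "dist X A = dist X B" "dist X B = dist X C"
  shows "orthocenter A B C = A + B + C - 2 * X"
  using assms(2,3) unfolding dist_eq_iff_cnj
  by (intro orthocenter_eqI assms(1)) (simp_all add: inner_eq_0_iff_cnj; algebra)+

lemma euler_line_eq_line:
  fixes A B C X :: complex
  assumes "\<not> collinear {A, B, C}" "dist X A = dist X B" "dist X B = dist X C"
  shows "euler_line A B C = line X (centroid A B C)"
proof -
  have "orthocenter A B C = X + 3 *\<^sub>R (centroid A B C - X)"
    unfolding orthocenter_eq_vertex_sum[OF assms] centroid_def by (simp add: scaleR_conv_of_real)
  then have "orthocenter A B C \<in> line X (centroid A B C)"
    unfolding line_def affine_hull_2_alt by blast
  then show ?thesis
    unfolding euler_line_def line_def circumcenter_eqI[OF assms]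
    by (metis hull_redundant insert_commute)
qed

lemma incenter_rotate: "incenter B C A = incenter A B C"
  unfolding incenter_def Let_def by (simp add: add_ac)

lemma circumcenter_rotate: "circumcenter B C A = circumcenter A B C"
  unfolding circumcenter_def by (rule arg_cong[where f = The], rule ext) argo

lemma orthocenter_rotate: "orthocenter B C A = orthocenter A B C"
  unfolding orthocenter_def by (rule arg_cong[where f = The], rule ext) argo

lemma centroid_rotate: "centroid B C A = centroid A B C"
  unfolding centroid_def by (simp add: add_ac)

lemma euler_line_rotate: "euler_line B C A = euler_line A B C"
  unfolding euler_line_def circumcenter_rotate[of B C A] orthocenter_rotate[of B C A]
    centroid_rotate[of B C A] ..

lemma cnj_mult_scaled:
  fixes k u v :: complex
  shows "cnj (k * u) * (k * v) = of_real ((cmod k)\<^sup>2) * (cnj u * v)"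
  unfolding complex_norm_square complex_cnj_mult by (simp only: ac_simps)

lemma diff_similarity:
  fixes P k u v :: complex
  shows "(P + k * u) - (P + k * v) = k * (u - v)"
  by (simp add: algebra_simps)

lemma collinear_similarity_iff:
  fixes P k a b c :: complex
  assumes "k \<noteq> 0"
  shows "collinear {P + k * a, P + k * b, P + k * c} \<longleftrightarrow> collinear {a, b, c}"
  unfolding collinear_iff_Im_cnj_mult diff_similarity cnj_mult_scaled using assms by simp

lemma inner_similarity:
  fixes P k w x y z :: complex
  shows "inner ((P + k * w) - (P + k * x)) ((P + k * y) - (P + k * z))
    = (cmod k)\<^sup>2 * inner (w - x) (y - z)"
proof -
  have inner_Re: "inner u v = Re (cnj u * v)" for u v :: complex
    by (simp add: inner_complex_def)
  show ?thesis
    unfolding inner_Re diff_similarity cnj_mult_scaled by simp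
qed

lemma orthocenter_similarity:
  fixes P k a b c h :: complex
  assumes "k \<noteq> 0" "\<not> collinear {a, b, c}"
    and "inner (h - a) (b - c) = 0" "inner (h - b) (c - a) = 0" "inner (h - c) (a - b) = 0"
  shows "orthocenter (P + k * a) (P + k * b) (P + k * c) = P + k * h"
proof (rule orthocenter_eqI)
  show "\<not> collinear {P + k * a, P + k * b, P + k * c}"
    using assms(2) collinear_similarity_iff[OF assms(1)] by blast
qed (use assms(3-5) in \<open>simp_all only: inner_similarity mult_zero_right\<close>)

lemma circumcenter_similarity:
  fixes P k a b c x :: complex
  assumes "k \<noteq> 0" "\<not> collinear {a, b, c}" "dist x a = dist x b" "dist x b = dist x c"
  shows "circumcenter (P + k * a) (P + k * b) (P + k * c) = P + k * x"
proof (rule circumcenter_eqI)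
  show "\<not> collinear {P + k * a, P + k * b, P + k * c}"
    using assms(2) collinear_similarity_iff[OF assms(1)] by blast
qed (use assms(3,4) in \<open>simp_all add: dist_mult_left\<close>)

lemma centroid_similarity:
  fixes P k a b c :: complex
  shows "centroid (P + k * a) (P + k * b) (P + k * c) = P + k * centroid a b c"
  unfolding centroid_def by (simp add: algebra_simps add_divide_distrib)

lemma reflect_similarity:
  fixes P k p q z :: complex
  assumes "k \<noteq> 0"
  shows "reflect (P + k * p) (P + k * q) (P + k * z) = P + k * reflect p q z"
proof -
  have "k * (q - p) / (cnj k * cnj (q - p)) * (cnj k * cnj (z - p))
      = k * ((q - p) / cnj (q - p) * cnj (z - p))"
    using assms by (simp add: mult.assoc)
  then show ?thesis
    unfolding reflect_def diff_similarity complex_cnj_mult by (simp add: distrib_left)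
qed

lemma affine_map_image_line:
  fixes L :: "complex \<Rightarrow> complex"
  assumes "bounded_linear L"
  shows "(\<lambda>z. c + L z) ` line x y = line (c + L x) (c + L y)"
proof -
  have "(\<lambda>z. c + L z) ` line x y = (\<lambda>z. c + z) ` L ` (affine hull {x, y})"
    unfolding line_def by (simp add: image_image)
  also have "\<dots> = line (c + L x) (c + L y)"
    unfolding line_def affine_hull_linear_image[OF assms] affine_hull_translation[symmetric]
    by simp
  finally show ?thesis .
qed

lemma similarity_image_line:
  fixes P k x y :: complex
  shows "(\<lambda>z. P + k * z) ` line x y = line (P + k * x) (P + k * y)"
  using affine_map_image_line[OF bounded_linear_mult_right] .

lemma euler_line_similarity:
  fixes P k a b c x :: complex
  assumes "k \<noteq> 0" "\<not> collinear {a, b, c}" "dist x a = dist x b" "dist x b = dist x c"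
  shows "euler_line (P + k * a) (P + k * b) (P + k * c)
    = (\<lambda>z. P + k * z) ` line x (centroid a b c)"
proof -
  have "euler_line (P + k * a) (P + k * b) (P + k * c)
      = line (P + k * x) (P + k * centroid a b c)"
    unfolding centroid_similarity[symmetric] using assms
    by (intro euler_line_eq_line) (simp_all add: collinear_similarity_iff dist_mult_left)
  then show ?thesis
    by (simp only: similarity_image_line)
qed

lemma reflect_image_line:
  fixes P Q x y :: complex
  shows "reflect P Q ` line x y = line (reflect P Q x) (reflect P Q y)"
proof -
  define k where "k = (Q - P) / cnj (Q - P)"
  have "reflect P Q = (\<lambda>z. (P - k * cnj P) + k * cnj z)"
    unfolding reflect_def k_def[symmetric] by (simp add: algebra_simps)
  then show ?thesis
    using affine_map_image_line[OF bounded_linear_const_mult[OF bounded_linear_cnj]] by metis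
qed

lemma inj_reflect:
  fixes P Q :: complex
  assumes "P \<noteq> Q"
  shows "inj (reflect P Q)"
  using assms by (intro injI) (simp add: reflect_def)

lemma reflect_eq:
  fixes P Q k z :: complex
  assumes "P \<noteq> Q" "Q - P = k * cnj (Q - P)"
  shows "reflect P Q z = P + k * cnj (z - P)"
proof -
  have "cnj (Q - P) \<noteq> 0"
    using assms(1) by simp
  then have "(Q - P) / cnj (Q - P) = k"
    using assms(2) by (metis nonzero_mult_div_cancel_right)
  then show ?thesis
    unfolding reflect_def by simp
qed

lemma real_mult_mem_line_0:
  fixes t z :: complex
  assumes "t \<in> \<real>"
  shows "t * z \<in> line z 0"
proof -
  obtain r where "t = of_real r"
    using assms Reals_cases by blast
  then have "t * z = z + (1 - r) *\<^sub>R (0 - z)"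
    by (simp add: scaleR_conv_of_real algebra_simps)
  then show ?thesis
    unfolding line_def affine_hull_2_alt by blast
qed

lemma line_eqI:
  fixes p q x y :: complex
  assumes "p \<noteq> q" "p \<in> line x y" "q \<in> line x y"
  shows "line p q = line x y"
proof -
  have "x \<noteq> y"
    using assms by (auto simp: line_def)
  have "line p q \<subseteq> line x y"
    using assms unfolding line_def by (intro hull_minimal) (auto simp: affine_affine_hull)
  then show ?thesis
    using assms(1) \<open>x \<noteq> y\<close> unfolding line_def
    by (intro affine_dim_equal) (auto simp: affine_affine_hull)
qed

definition tangents_meet :: "complex \<Rightarrow> complex \<Rightarrow> complex" where
  "tangents_meet u v = 2 * u * v / (u + v)"

lemma cnj_eq_inverse_if_unit:
  fixes u :: complex
  assumes "cmod u = 1"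
  shows "cnj u = 1 / u"
proof -
  have "u * cnj u = 1"
    using assms by (simp flip: complex_norm_square)
  then show ?thesis
    by (simp add: eq_divide_eq mult.commute)
qed

lemma eq_tangents_meet:
  fixes z u v :: complex and \<rho> :: real
  assumes "cmod u = 1" "cmod v = 1" "u \<noteq> v" "u + v \<noteq> 0"
    and "inner z u = \<rho>" "inner z v = \<rho>"
  shows "z = \<rho> * tangents_meet u v"
proof -
  have "u \<noteq> 0" "v \<noteq> 0"
    using assms(1,2) by auto
  have "z * cnj u + cnj z * u = 2 * \<rho>" "z * cnj v + cnj z * v = 2 * \<rho>"
    using assms(5,6) by (simp_all add: inner_eq_iff_cnj)
  then have "z + cnj z * u\<^sup>2 = 2 * \<rho> * u" "z + cnj z * v\<^sup>2 = 2 * \<rho> * v"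
    using \<open>u \<noteq> 0\<close> \<open>v \<noteq> 0\<close> assms(1,2)
    by (simp_all add: cnj_eq_inverse_if_unit field_simps power2_eq_square)
  then have "(v - u) * (z * (u + v)) = (v - u) * (2 * \<rho> * u * v)"
    by algebra
  then have "z * (u + v) = 2 * \<rho> * u * v"
    using assms(3) by simp
  then show ?thesis
    using assms(4) by (simp add: tangents_meet_def eq_divide_eq)
qed

lemma sgn_neq_if_not_collinear:
  fixes u v :: complex
  assumes "\<not> collinear {0, u, v}"
  shows "sgn u \<noteq> sgn v" and "sgn u + sgn v \<noteq> 0"
proof -
  have "u \<noteq> 0"
    using assms by auto
  then have ratio: "v / u = of_real (cmod v / cmod u) * (sgn v / sgn u)"
    by (simp add: sgn_eq)
  have "v / u \<notin> \<real>"
    using assms collinear_iff_Reals by blast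
  then show "sgn u \<noteq> sgn v" "sgn u + sgn v \<noteq> 0"
    using ratio \<open>u \<noteq> 0\<close> by (auto simp: sgn_zero_iff add_eq_0_iff split: if_splits)
qed

lemma cnj_tangents_meet:
  fixes u v :: complex
  assumes "cmod u = 1" "cmod v = 1" "u + v \<noteq> 0"
  shows "cnj (tangents_meet u v) = 2 / (u + v)"
proof -
  have "u \<noteq> 0" "v \<noteq> 0"
    using assms(1,2) by auto
  then show ?thesis
    using assms by (simp add: tangents_meet_def cnj_eq_inverse_if_unit field_simps)
qed

lemma not_collinear_tangents_meet_0:
  fixes u v w :: complex
  assumes "cmod u = 1" "cmod v = 1" "cmod w = 1" "u \<noteq> w" "u + v \<noteq> 0" "v + w \<noteq> 0"
  shows "\<not> collinear {tangents_meet u v, 0, tangents_meet v w}"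
proof
  define b c where "b = tangents_meet u v" and "c = tangents_meet v w"
  assume "collinear {tangents_meet u v, 0, tangents_meet v w}"
  then have "Im (cnj b * c) = 0"
    by (simp add: b_def c_def insert_commute collinear_iff_Im_cnj_mult)
  then have "b * cnj c = cnj b * c"
    by (metis complex_cnj_cnj complex_cnj_mult complex_is_Real_iff Reals_cnj_iff)
  moreover have "b * (u + v) = 2 * u * v" "c * (v + w) = 2 * v * w"
    using assms(5,6) by (simp_all add: b_def c_def tangents_meet_def)
  moreover have "cnj b = 2 / (u + v)" "cnj c = 2 / (v + w)"
    using assms by (simp_all add: b_def c_def cnj_tangents_meet)
  then have "cnj b * (u + v) = 2" "cnj c * (v + w) = 2"
    using assms(5,6) by (simp_all add: field_simps)
  ultimately have "4 * v * (u - w) = 0"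
    by algebra
  moreover have "v \<noteq> 0"
    using assms(2) by auto
  ultimately show False
    using assms(4) by simp
qed


text \<open>
  Normalised coordinates: d, e, f are the points where BC, CA, AB touch the incircle, taken to be
  the unit circle around 0, so that A, B, C are tangents_meet e f, tangents_meet f d and
  tangents_meet d e. Then ha, hb, hc are HA, HB, HC; oa, ob, oc are OA, OB, OC; and
  ocirc is the circumcenter of OA OB OC.
\<close>

locale incircle_coords =
  fixes d e f :: complex
  assumes unit: "cmod d = 1" "cmod e = 1" "cmod f = 1"
    and distinct: "d \<noteq> e" "e \<noteq> f" "f \<noteq> d"
    and not_antipodal: "d + e \<noteq> 0" "e + f \<noteq> 0" "f + d \<noteq> 0"
begin

lemma cnj_unit [simp]: "cnj d = 1 / d" "cnj e = 1 / e" "cnj f = 1 / f"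
  using unit by (simp_all add: cnj_eq_inverse_if_unit)

lemma nonzero:
  "d \<noteq> 0" "e \<noteq> 0" "f \<noteq> 0"
  "d + e \<noteq> 0" "e + f \<noteq> 0" "f + d \<noteq> 0" "e + d \<noteq> 0" "f + e \<noteq> 0" "d + f \<noteq> 0"
  "d - e \<noteq> 0" "e - f \<noteq> 0" "f - d \<noteq> 0" "e - d \<noteq> 0" "f - e \<noteq> 0" "d - f \<noteq> 0"
  using unit distinct not_antipodal by (auto simp: add.commute)

lemma inverse_sums:
  "1 / d + 1 / e = (d + e) / (d * e)" "1 / e + 1 / f = (e + f) / (e * f)"
  "1 / f + 1 / d = (f + d) / (f * d)" "1 / e + 1 / d = (e + d) / (e * d)"
  "1 / f + 1 / e = (f + e) / (f * e)" "1 / d + 1 / f = (d + f) / (d * f)"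
  using nonzero by (simp_all add: field_simps)

definition "den = (d + e) * (e + f) * (f + d)"
definition "ha = 2 * d\<^sup>2 * (e + f) / ((d + e) * (d + f))"
definition "hb = 2 * e\<^sup>2 * (f + d) / ((e + f) * (e + d))"
definition "hc = 2 * f\<^sup>2 * (d + e) / ((f + d) * (f + e))"
definition "oa = 2 * e * f * (e * f - d\<^sup>2) / den"
definition "ob = 2 * f * d * (f * d - e\<^sup>2) / den"
definition "oc = 2 * d * e * (d * e - f\<^sup>2) / den"
definition "ocirc = - 2 * (d + e + f) * (d * e * f) / den"

lemmas coords_defs = tangents_meet_def den_def ha_def hb_def hc_def oa_def ob_def oc_def ocirc_def

lemma den_nonzero: "den \<noteq> 0"
  unfolding den_def using nonzero by simp

lemma cnj_vertices:
  "cnj (tangents_meet e f) = 2 / (e + f)"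
  "cnj (tangents_meet f d) = 2 / (f + d)"
  "cnj (tangents_meet d e) = 2 / (d + e)"
  using unit not_antipodal by (simp_all add: cnj_tangents_meet)

lemma cnj_coords:
  "cnj ha = 2 * (e + f) / ((d + e) * (d + f))"
  "cnj hb = 2 * (f + d) / ((e + f) * (e + d))"
  "cnj hc = 2 * (d + e) / ((f + d) * (f + e))"
  "cnj oa = 2 * (d\<^sup>2 - e * f) / den"
  "cnj ob = 2 * (e\<^sup>2 - f * d) / den"
  "cnj oc = 2 * (f\<^sup>2 - d * e) / den"
  "cnj ocirc = - 2 * (d * e + e * f + f * d) / den"
  unfolding coords_defs
  by (simp_all add: inverse_sums) (simp_all add: nonzero divide_simps power2_eq_square, algebra)

lemma not_collinear_vertices_incenter:
  "\<not> collinear {tangents_meet f d, 0, tangents_meet d e}"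
  "\<not> collinear {tangents_meet d e, 0, tangents_meet e f}"
  "\<not> collinear {tangents_meet e f, 0, tangents_meet f d}"
  using unit distinct not_antipodal by (simp_all add: not_collinear_tangents_meet_0)

lemma orthocenter_conditions:
  "inner (ha - tangents_meet f d) (0 - tangents_meet d e) = 0"
  "inner (ha - 0) (tangents_meet d e - tangents_meet f d) = 0"
  "inner (ha - tangents_meet d e) (tangents_meet f d - 0) = 0"
  "inner (hb - tangents_meet d e) (0 - tangents_meet e f) = 0"
  "inner (hb - 0) (tangents_meet e f - tangents_meet d e) = 0"
  "inner (hb - tangents_meet e f) (tangents_meet d e - 0) = 0"
  "inner (hc - tangents_meet e f) (0 - tangents_meet f d) = 0"
  "inner (hc - 0) (tangents_meet f d - tangents_meet e f) = 0"
  "inner (hc - tangents_meet f d) (tangents_meet e f - 0) = 0"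
  by (simp_all only: inner_eq_0_iff_cnj complex_cnj_diff complex_cnj_zero cnj_vertices cnj_coords)
    (simp_all add: coords_defs nonzero divide_simps power2_eq_square, algebra+)

lemma circumcenter_conditions:
  "dist oa (tangents_meet e f) = dist oa hb" "dist oa hb = dist oa hc"
  "dist ob (tangents_meet f d) = dist ob hc" "dist ob hc = dist ob ha"
  "dist oc (tangents_meet d e) = dist oc ha" "dist oc ha = dist oc hb"
  "dist ocirc oa = dist ocirc ob" "dist ocirc ob = dist ocirc oc"
  by (simp_all only: dist_eq_iff_cnj complex_cnj_diff cnj_vertices cnj_coords)
    (simp_all add: coords_defs nonzero divide_simps power2_eq_square, algebra+)

lemma oc_minus_ob: "oc - ob = 2 * d * (e - f) * (d * e + e * f + f * d) / den"
  unfolding oc_def ob_def using den_nonzero by (simp add: field_simps, algebra)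

lemma cnj_oc_minus_ob: "cnj (oc - ob) = 2 * (f - e) * (d + e + f) / den"
  unfolding complex_cnj_diff cnj_coords using den_nonzero by (simp add: field_simps, algebra)

lemma cnj_circumcenter_centroid_minus_ob:
  "cnj (ocirc - ob) = - 2 * e * (d + e + f) / den"
  "cnj (centroid oa ob oc - ob) = 2 * (d + e + f) * (d + f - 2 * e) / (3 * den)"
  by (simp_all only: centroid_def complex_cnj_diff complex_cnj_divide complex_cnj_add cnj_coords)
    (simp_all add: den_nonzero divide_simps power2_eq_square, algebra+)

definition "circ_coeff = (e\<^sup>2 + e * f + f\<^sup>2) / (e + f)\<^sup>2"
definition "cent_coeff =
  (2 * f\<^sup>2 * d - f * e\<^sup>2 - d\<^sup>2 * e + 2 * d * e\<^sup>2 - e * f\<^sup>2 - f * d\<^sup>2) / (3 * d * (e + f)\<^sup>2)"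

lemma circ_coeff_real: "circ_coeff \<in> \<real>"
  unfolding circ_coeff_def Reals_cnj_iff
  by (simp add: inverse_sums) (simp add: nonzero divide_simps power2_eq_square; algebra)

lemma cent_coeff_real: "cent_coeff \<in> \<real>"
  unfolding cent_coeff_def Reals_cnj_iff
  by (simp add: inverse_sums) (simp add: nonzero divide_simps power2_eq_square; algebra)

lemma reflect_circumcenter_centroid:
  assumes "ob \<noteq> oc"
  shows "reflect ob oc ocirc = circ_coeff * ha"
    and "reflect ob oc (centroid oa ob oc) = cent_coeff * ha"
proof -
  have S1: "d + e + f \<noteq> 0"
    using assms cnj_oc_minus_ob
    by (metis complex_cnj_zero_iff divide_eq_0_iff mult_zero_right right_minus_eq)
  have "oc - ob = - d * (d * e + e * f + f * d) / (d + e + f) * cnj (oc - ob)"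
    unfolding cnj_oc_minus_ob unfolding oc_minus_ob using S1 den_nonzero
    by (simp add: divide_simps; algebra)
  note reflect = reflect_eq[OF assms this]
  have "reflect ob oc ocirc = ob + 2 * d * e * (d * e + e * f + f * d) / den"
    unfolding reflect cnj_circumcenter_centroid_minus_ob using S1 den_nonzero
    by (simp add: divide_simps; algebra)
  also have "\<dots> = circ_coeff * ha"
    unfolding circ_coeff_def ob_def ha_def den_def
    by (simp add: nonzero divide_simps power2_eq_square; algebra)
  finally show "reflect ob oc ocirc = circ_coeff * ha" .
  have "3 * e + 3 * f \<noteq> 0"
    using not_antipodal(2) by (metis distrib_left mult_eq_0_iff zero_neq_numeral)
  have "reflect ob oc (centroid oa ob oc)
      = ob - 2 * d * (d * e + e * f + f * d) * (d + f - 2 * e) / (3 * den)"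
    unfolding reflect cnj_circumcenter_centroid_minus_ob using S1 den_nonzero
    by (simp add: divide_simps; algebra)
  also have "\<dots> = cent_coeff * ha"
    using \<open>3 * e + 3 * f \<noteq> 0\<close>
    unfolding cent_coeff_def ob_def ha_def den_def
    by (simp add: nonzero divide_simps power2_eq_square; algebra)
  finally show "reflect ob oc (centroid oa ob oc) = cent_coeff * ha" .
qed

lemma reflect_euler_line:
  assumes "ob \<noteq> oc" "ocirc \<noteq> centroid oa ob oc"
  shows "reflect ob oc ` line ocirc (centroid oa ob oc) = line ha 0"
proof -
  have "reflect ob oc ocirc \<noteq> reflect ob oc (centroid oa ob oc)"
    using inj_reflect[OF assms(1)] assms(2) by (auto dest: injD)
  then show ?thesis
    unfolding reflect_image_line reflect_circumcenter_centroid[OF assms(1)]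
    using circ_coeff_real cent_coeff_real by (intro line_eqI real_mult_mem_line_0)
qed

end

text \<open>The numerator is twice the signed area of ABC, so this is the inradius up to orientation.\<close>

definition signed_inradius :: "complex \<Rightarrow> complex \<Rightarrow> complex \<Rightarrow> real" where
  "signed_inradius A B C = Im (cnj (B - A) * (C - A)) / (dist B C + dist C A + dist A B)"

lemma inner_incenter_side_normal:
  fixes A B C :: complex
  assumes "A \<noteq> C"
  shows "inner (A - incenter A B C) (\<i> * sgn (C - A)) = signed_inradius A B C"
    and "inner (C - incenter A B C) (\<i> * sgn (C - A)) = signed_inradius A B C"
proof -
  define a b c where "a = dist B C" and "b = dist C A" and "c = dist A B"
  have "b > 0"
    using assms by (simp add: b_def)
  then have "a + b + c > 0"
    using zero_le_dist[of B C] zero_le_dist[of A B] unfolding a_def c_def by linarith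
  then have s: "complex_of_real (a + b + c) \<noteq> 0"
    by (metis less_irrefl of_real_eq_0_iff)
  have b: "complex_of_real b \<noteq> 0"
    using \<open>b > 0\<close> by simp
  have I: "incenter A B C = (of_real a * A + of_real b * B + of_real c * C) / of_real (a + b + c)"
    by (simp add: incenter_def Let_def a_def b_def c_def)
  have e: "\<i> * sgn (C - A) = \<i> * (C - A) / of_real b"
    by (simp add: sgn_eq b_def dist_norm)
  have \<rho>: "complex_of_real (2 * signed_inradius A B C)
      = \<i> * (cnj (cnj (B - A) * (C - A)) - cnj (B - A) * (C - A)) / of_real (a + b + c)"
    unfolding signed_inradius_def a_def b_def c_def
    by (simp add: complex_eq_iff algebra_simps divide_simps)
  show "inner (A - incenter A B C) (\<i> * sgn (C - A)) = signed_inradius A B C"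
    unfolding inner_eq_iff_cnj \<rho> e I using s b
    by (simp add: divide_simps) (simp add: algebra_simps)
  show "inner (C - incenter A B C) (\<i> * sgn (C - A)) = signed_inradius A B C"
    unfolding inner_eq_iff_cnj \<rho> e I using s b
    by (simp add: divide_simps) (simp add: algebra_simps)
qed

lemma signed_inradius_rotate: "signed_inradius B C A = signed_inradius A B C"
  unfolding signed_inradius_def by (simp add: algebra_simps)

lemma signed_inradius_nonzero:
  fixes A B C :: complex
  assumes "\<not> collinear {A, B, C}"
  shows "signed_inradius A B C \<noteq> 0"
proof -
  have "A \<noteq> B"
    using assms by auto
  then have "dist B C + dist C A + dist A B > 0"
    by (simp add: add_nonneg_pos)
  then show ?thesis
    using assms by (simp add: signed_inradius_def collinear_iff_Im_cnj_mult)
qed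

lemma side_normals_not_parallel:
  fixes A B C :: complex
  assumes "\<not> collinear {A, B, C}"
  shows "\<i> * sgn (C - A) \<noteq> \<i> * sgn (A - B)"
    and "\<i> * sgn (C - A) + \<i> * sgn (A - B) \<noteq> 0"
proof -
  have "\<not> collinear {0, C - A, A - B}"
    using assms by (simp add: collinear_iff_Im_cnj_mult algebra_simps)
  then have "sgn (C - A) \<noteq> sgn (A - B)" "sgn (C - A) + sgn (A - B) \<noteq> 0"
    by (rule sgn_neq_if_not_collinear)+
  then show "\<i> * sgn (C - A) \<noteq> \<i> * sgn (A - B)"
    and "\<i> * sgn (C - A) + \<i> * sgn (A - B) \<noteq> 0"
    by (simp, metis distrib_left mult_eq_0_iff complex_i_not_zero)
qed

lemma incircle_coords_side_normals:
  fixes A B C :: complex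
  assumes "\<not> collinear {A, B, C}"
  shows "incircle_coords (\<i> * sgn (B - C)) (\<i> * sgn (C - A)) (\<i> * sgn (A - B))"
proof -
  have "\<not> collinear {B, C, A}" "\<not> collinear {C, A, B}"
    using assms by (simp_all add: insert_commute)
  note normals = side_normals_not_parallel[OF assms] side_normals_not_parallel[OF this(1)]
    side_normals_not_parallel[OF this(2)]
  have "A \<noteq> B" "B \<noteq> C" "C \<noteq> A"
    using assms by (auto simp: insert_commute)
  then show ?thesis
    using normals by unfold_locales (simp_all add: norm_mult norm_sgn)
qed

lemma vertex_eq_tangents_meet:
  fixes A B C :: complex
  assumes "\<not> collinear {A, B, C}"
  shows "A = incenter A B C
    + signed_inradius A B C * tangents_meet (\<i> * sgn (C - A)) (\<i> * sgn (A - B))"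
proof -
  have "A \<noteq> B" "C \<noteq> A"
    using assms by (auto simp: insert_commute)
  have "inner (A - incenter A B C) (\<i> * sgn (C - A)) = signed_inradius A B C"
    using inner_incenter_side_normal(1) \<open>C \<noteq> A\<close> by metis
  moreover have "inner (A - incenter A B C) (\<i> * sgn (A - B)) = signed_inradius A B C"
    using inner_incenter_side_normal(2)[of B A C] \<open>A \<noteq> B\<close>
    by (simp add: incenter_rotate signed_inradius_rotate)
  ultimately have "A - incenter A B C
      = signed_inradius A B C * tangents_meet (\<i> * sgn (C - A)) (\<i> * sgn (A - B))"
    using side_normals_not_parallel[OF assms] \<open>A \<noteq> B\<close> \<open>C \<noteq> A\<close>
    by (intro eq_tangents_meet) (simp_all add: norm_mult norm_sgn)
  then show ?thesis
    by (simp add: algebra_simps)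
qed

lemma incircle_normal_form:
  fixes A B C :: complex
  assumes "\<not> collinear {A, B, C}"
  obtains d e f k where "incircle_coords d e f" "k \<noteq> 0"
    "A = incenter A B C + k * tangents_meet e f"
    "B = incenter A B C + k * tangents_meet f d"
    "C = incenter A B C + k * tangents_meet d e"
proof -
  have "\<not> collinear {B, C, A}" "\<not> collinear {C, A, B}"
    using assms by (simp_all add: insert_commute)
  then show ?thesis
    using that[OF incircle_coords_side_normals[OF assms], of "signed_inradius A B C"]
      signed_inradius_nonzero[OF assms] vertex_eq_tangents_meet[OF assms]
      vertex_eq_tangents_meet[of B C A] vertex_eq_tangents_meet[of C A B]
    by (simp add: incenter_rotate signed_inradius_rotate)
qed

lemma reflect_euler_line_side:
  fixes A B C I HA HB HC OA OB OC :: complex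
  assumes nondeg: "\<not> collinear {A, B, C}"
    and I: "I = incenter A B C"
    and H: "HA = orthocenter B I C" "HB = orthocenter C I A" "HC = orthocenter A I B"
    and nd: "\<not> collinear {A, HB, HC}" "\<not> collinear {B, HC, HA}" "\<not> collinear {C, HA, HB}"
    and O: "OA = circumcenter A HB HC" "OB = circumcenter B HC HA" "OC = circumcenter C HA HB"
    and ndO: "\<not> collinear {OA, OB, OC}"
    and euler: "circumcenter OA OB OC \<noteq> centroid OA OB OC"
  shows "reflect OB OC ` euler_line OA OB OC = line HA I"
proof -
  obtain d e f k where "incircle_coords d e f" and k: "k \<noteq> 0"
    and vertices: "A = I + k * tangents_meet e f" "B = I + k * tangents_meet f d"
      "C = I + k * tangents_meet d e"
    using incircle_normal_form[OF nondeg] unfolding I[symmetric] .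
  interpret incircle_coords d e f by fact
  have HA: "HA = I + k * ha" "HB = I + k * hb" "HC = I + k * hc"
    using
      orthocenter_similarity[OF k not_collinear_vertices_incenter(1) orthocenter_conditions(1-3), of I]
      orthocenter_similarity[OF k not_collinear_vertices_incenter(2) orthocenter_conditions(4-6), of I]
      orthocenter_similarity[OF k not_collinear_vertices_incenter(3) orthocenter_conditions(7-9), of I]
    by (simp_all add: H vertices)
  have "\<not> collinear {tangents_meet e f, hb, hc}" "\<not> collinear {tangents_meet f d, hc, ha}"
    "\<not> collinear {tangents_meet d e, ha, hb}"
    using nd unfolding vertices HA collinear_similarity_iff[OF k] .
  then have OA: "OA = I + k * oa" "OB = I + k * ob" "OC = I + k * oc"
    using circumcenter_similarity[OF k _ circumcenter_conditions(1,2), of I]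
      circumcenter_similarity[OF k _ circumcenter_conditions(3,4), of I]
      circumcenter_similarity[OF k _ circumcenter_conditions(5,6), of I]
    by (simp_all add: O vertices HA)
  have ndo: "\<not> collinear {oa, ob, oc}"
    using ndO unfolding OA collinear_similarity_iff[OF k] .
  then have "ob \<noteq> oc"
    by auto
  have "ocirc \<noteq> centroid oa ob oc"
    using euler k unfolding OA circumcenter_similarity[OF k ndo circumcenter_conditions(7,8)]
      centroid_similarity by auto
  have "reflect OB OC ` euler_line OA OB OC
      = (\<lambda>z. I + k * z) ` reflect ob oc ` line ocirc (centroid oa ob oc)"
    unfolding OA euler_line_similarity[OF k ndo circumcenter_conditions(7,8)]
    by (simp add: image_image reflect_similarity[OF k])
  also have "\<dots> = line HA I"
    using reflect_euler_line[OF \<open>ob \<noteq> oc\<close> \<open>ocirc \<noteq> centroid oa ob oc\<close>]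
    by (simp add: HA similarity_image_line)
  finally show ?thesis .
qed

theorem proposition5p7:
  fixes A B C :: complex
  assumes nondeg: "\<not> collinear {A, B, C}"
  defines "I \<equiv> incenter A B C"
  defines "HA \<equiv> orthocenter B I C" and "HB \<equiv> orthocenter C I A" and "HC \<equiv> orthocenter A I B"
  assumes ndA: "\<not> collinear {A, HB, HC}" and ndB: "\<not> collinear {B, HC, HA}"
      and ndC: "\<not> collinear {C, HA, HB}"
  defines "OA \<equiv> circumcenter A HB HC" and "OB \<equiv> circumcenter B HC HA"
      and "OC \<equiv> circumcenter C HA HB"
  assumes ndO: "\<not> collinear {OA, OB, OC}"
      and euler_def: "circumcenter OA OB OC \<noteq> centroid OA OB OC"
  shows "reflect OB OC ` euler_line OA OB OC = line HA I
       \<and> reflect OC OA ` euler_line OA OB OC = line HB I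
       \<and> reflect OA OB ` euler_line OA OB OC = line HC I"
proof -
  have rotated: "\<not> collinear {B, C, A}" "\<not> collinear {C, A, B}"
    "\<not> collinear {OB, OC, OA}" "\<not> collinear {OC, OA, OB}"
    using nondeg ndO by (simp_all add: insert_commute)
  note defs = I_def HA_def HB_def HC_def OA_def OB_def OC_def
  have "reflect OB OC ` euler_line OA OB OC = line HA I"
    using reflect_euler_line_side[OF nondeg _ _ _ _ ndA ndB ndC _ _ _ ndO euler_def]
    by (simp add: defs)
  moreover have "reflect OC OA ` euler_line OB OC OA = line HB I"
    using reflect_euler_line_side[OF rotated(1) _ _ _ _ ndB ndC ndA _ _ _ rotated(3)] euler_def
    by (simp add: defs incenter_rotate circumcenter_rotate centroid_rotate)
  moreover have "reflect OA OB ` euler_line OC OA OB = line HC I"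
    using reflect_euler_line_side[OF rotated(2) _ _ _ _ ndC ndA ndB _ _ _ rotated(4)] euler_def
    by (simp add: defs incenter_rotate circumcenter_rotate centroid_rotate)
  ultimately show ?thesis
    by (simp add: euler_line_rotate)
qed

end
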